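(* $D(18,\{3,4\})\ge 30$; equivalently, every $\{K_3,K_4\}$-decomposition of $K_{18}$ has $\alpha\ge 9$.
   Context: A $\{K_3,K_4\}$-decomposition of $K_v$ is a collection of subgraphs, each isomorphic to $K_3$ or $K_4$, such that every edge of $K_v$ lies in exactly one of them. $\alpha$ and $\beta$ denote the numbers of copies of $K_3$ and $K_4$ in the decomposition (so $3\alpha+6\beta=\binom{v}{2}$). $D(v,\{3,4\})$ is the minimum of $\alpha+\beta$ over all such decompositions of $K_v$. *)

theory Defs
  imports Main
begin

text \<open>A copy of K_k is identified with
its k-element vertex set (a block).\<close>

definition is_decomp :: "nat \<Rightarrow> nat set \<Rightarrow> nat set set \<Rightarrow> bool" where
  "is_decomp v K B \<longleftrightarrow>
     (\<forall>b\<in>B. b \<subseteq> {..<v} \<and> card b \<in> K) \<and>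
     (\<forall>x<v. \<forall>y<v. x \<noteq> y \<longrightarrow> (\<exists>!b. b \<in> B \<and> x \<in> b \<and> y \<in> b))"

definition D :: "nat \<Rightarrow> nat set \<Rightarrow> nat" where
  "D v K = Inf (card ` {B. is_decomp v K B})"

end

theory Submission
  imports Defs
begin

text \<open>
  Write t(y) and k(y) for the numbers of triangles and of K4's through a vertex y. The blocks
  through y partition the 17 other vertices, so 2 t(y) + 3 k(y) = 17 and t(y) \<in> {1, 4, 7};
  double counting gives \<alpha> + 2\<beta> = 51, so \<alpha> is odd and \<alpha> \<ge> 7 because 3\<alpha> = \<Sum> t(y) \<ge> 18.
  If \<alpha> + \<beta> < 30 then \<alpha> = 7 and \<Sum> t(y) = 21: a single vertex x lies on four triangles and
  every other vertex on one triangle and five K4's.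

  Let A be the 8 vertices joined to x by triangles and C the 9 joined to x by K4's. Counting at
  the vertices of A, the 19 K4's avoiding x satisfy \<Sum>|K \<inter> A| = 40 and \<Sum>|K \<inter> A|^2 = 88, so the
  excesses e(K) = |K \<inter> A| - 2 have \<Sum>e = 2 and \<Sum>e^2 = 4, while at a vertex of A (resp. C) the
  excesses of the K4's through it sum to 1 (resp. 0). An excess of \<plusminus>2 forces all other excesses
  to vanish, which fails at a vertex of A outside that K4. Otherwise exactly one K4 K0 has e = -1;
  its vertex in A lies on a K4 K1 with e = 1, whose vertex in C must lie on K0 again, so K0 and
  K1 share two vertices.
\<close>

lemma sum_card_Int_eq_sum_incident:
  fixes g :: "'a set \<Rightarrow> 'b::comm_semiring_1"
  assumes "finite A" "finite F"
  shows "(\<Sum>K\<in>F. of_nat (card (K \<inter> A)) * g K) = (\<Sum>a\<in>A. \<Sum>K\<in>{K\<in>F. a \<in> K}. g K)"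
proof -
  have "(\<Sum>a\<in>A. \<Sum>K\<in>{K\<in>F. a \<in> K}. g K) = (\<Sum>a\<in>A. \<Sum>K\<in>F. if a \<in> K then g K else 0)"
    using assms by (simp add: sum.inter_filter)
  also have "\<dots> = (\<Sum>K\<in>F. \<Sum>a\<in>A. if a \<in> K then g K else 0)"
    by (rule sum.swap)
  also have "\<dots> = (\<Sum>K\<in>F. of_nat (card (K \<inter> A)) * g K)"
  proof (rule sum.cong)
    fix K
    have "(\<Sum>a\<in>A. if a \<in> K then g K else 0) = (\<Sum>a\<in>{a\<in>A. a \<in> K}. g K)"
      using assms(1) by (rule sum.inter_filter[symmetric])
    also have "{a\<in>A. a \<in> K} = K \<inter> A"
      by blast
    finally show "(\<Sum>a\<in>A. if a \<in> K then g K else 0) = of_nat (card (K \<inter> A)) * g K"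
      by simp
  qed simp
  finally show ?thesis
    by simp
qed

lemma sum_gt_member_imp_pos:
  fixes f :: "'a \<Rightarrow> 'b::linordered_ab_group_add"
  assumes "finite A" "a \<in> A" "f a < sum f A"
  shows "\<exists>b\<in>A - {a}. 0 < f b"
proof (rule ccontr)
  assume "\<not> (\<exists>b\<in>A - {a}. 0 < f b)"
  then have "sum f (A - {a}) \<le> 0"
    by (intro sum_nonpos) (simp add: not_less)
  then show False
    using assms by (simp add: sum.remove)
qed

lemma sum_lt_member_imp_neg:
  fixes f :: "'a \<Rightarrow> 'b::linordered_ab_group_add"
  assumes "finite A" "a \<in> A" "sum f A < f a"
  shows "\<exists>b\<in>A - {a}. f b < 0"
  using sum_gt_member_imp_pos[of A a "\<lambda>x. - f x"] assms by (simp add: sum_negf)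

section \<open>Decompositions of complete graphs\<close>

locale decomposition =
  fixes v :: nat and Ks :: "nat set" and B :: "nat set set"
  assumes decomp: "is_decomp v Ks B"
begin

lemma block_subset: "b \<in> B \<Longrightarrow> b \<subseteq> {..<v}"
  using decomp by (auto simp: is_decomp_def)

lemma card_block: "b \<in> B \<Longrightarrow> card b \<in> Ks"
  using decomp by (auto simp: is_decomp_def)

lemma finite_block: "b \<in> B \<Longrightarrow> finite b"
  using block_subset finite_subset by blast

lemma finite_blocks: "finite B"
  using block_subset by (intro finite_subset[of B "Pow {..<v}"]) auto

lemma block_eqI:
  assumes "b \<in> B" "b' \<in> B" "y \<in> b" "z \<in> b" "y \<in> b'" "z \<in> b'" "y \<noteq> z"
  shows "b = b'"
proof -
  have "y < v" "z < v"
    using assms block_subset by auto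
  then have "\<exists>!b. b \<in> B \<and> y \<in> b \<and> z \<in> b"
    using decomp assms(7) unfolding is_decomp_def by blast
  then show ?thesis
    using assms(1-6) by (elim ex1E) blast
qed

lemma pair_in_block:
  assumes "y < v" "z < v" "y \<noteq> z"
  obtains b where "b \<in> B" "y \<in> b" "z \<in> b"
proof -
  have "\<exists>!b. b \<in> B \<and> y \<in> b \<and> z \<in> b"
    using decomp assms unfolding is_decomp_def by blast
  then show thesis
    using that by blast
qed

lemma sum_card_blocks_at:
  assumes y: "y \<in> S" and S: "S \<subseteq> {..<v}"
  shows "(\<Sum>b\<in>{b\<in>B. y \<in> b}. card (b \<inter> S)) = card {b\<in>B. y \<in> b} + card S - 1"
proof -
  let ?By = "{b\<in>B. y \<in> b}"
  have partition: "S - {y} = (\<Union>b\<in>?By. b \<inter> S - {y})"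
  proof
    show "S - {y} \<subseteq> (\<Union>b\<in>?By. b \<inter> S - {y})"
    proof
      fix z
      assume z: "z \<in> S - {y}"
      then obtain b where "b \<in> B" "y \<in> b" "z \<in> b"
        using pair_in_block[of y z] y S by blast
      then show "z \<in> (\<Union>b\<in>?By. b \<inter> S - {y})"
        using z by blast
    qed
  qed blast
  have "card (S - {y}) = (\<Sum>b\<in>?By. card (b \<inter> S - {y}))"
    unfolding partition
  proof (rule card_UN_disjoint)
    show "finite ?By"
      using finite_blocks by simp
    show "\<forall>b\<in>?By. finite (b \<inter> S - {y})"
      using finite_block by blast
    show "\<forall>b\<in>?By. \<forall>b'\<in>?By. b \<noteq> b' \<longrightarrow> (b \<inter> S - {y}) \<inter> (b' \<inter> S - {y}) = {}"
    proof (intro ballI impI)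
      fix b b'
      assume "b \<in> ?By" "b' \<in> ?By" "b \<noteq> b'"
      then show "(b \<inter> S - {y}) \<inter> (b' \<inter> S - {y}) = {}"
        using block_eqI[of b b' y] by blast
    qed
  qed
  moreover have "card (b \<inter> S) = Suc (card (b \<inter> S - {y}))" if "b \<in> ?By" for b
  proof -
    have "finite (b \<inter> S)" "y \<in> b \<inter> S"
      using that y finite_block by auto
    then show ?thesis
      by (rule card_Suc_Diff1[symmetric])
  qed
  ultimately have "(\<Sum>b\<in>?By. card (b \<inter> S)) = card (S - {y}) + card ?By"
    by (simp add: sum_Suc)
  moreover have "0 < card S"
    using y S finite_subset[OF S] card_gt_0_iff by blast
  ultimately show ?thesis
    using y by simp
qed

lemma sum_card_blocks_at_vertex:
  assumes "y < v"
  shows "(\<Sum>b\<in>{b\<in>B. y \<in> b}. card b) = card {b\<in>B. y \<in> b} + v - 1"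
proof -
  have "(\<Sum>b\<in>{b\<in>B. y \<in> b}. card b) = (\<Sum>b\<in>{b\<in>B. y \<in> b}. card (b \<inter> {..<v}))"
    using block_subset by (intro sum.cong) (auto simp: Int_absorb2)
  then show ?thesis
    using sum_card_blocks_at[of y "{..<v}"] assms by simp
qed

end

section \<open>Decompositions into triangles and K4's\<close>

locale K34_decomposition = decomposition v "{3, 4}" B for v B
begin

definition tris :: "nat set set" where
  "tris = {b\<in>B. card b = 3}"

definition quads :: "nat set set" where
  "quads = {b\<in>B. card b = 4}"

definition tri_deg :: "nat \<Rightarrow> nat" where
  "tri_deg y = card {b\<in>tris. y \<in> b}"

definition quad_deg :: "nat \<Rightarrow> nat" where
  "quad_deg y = card {b\<in>quads. y \<in> b}"

lemma finite_tris: "finite tris" and finite_quads: "finite quads"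
  using finite_blocks by (simp_all add: tris_def quads_def)

lemma blocks_at_eq: "{b\<in>B. y \<in> b} = {b\<in>tris. y \<in> b} \<union> {b\<in>quads. y \<in> b}"
  using card_block by (auto simp: tris_def quads_def)

lemma card_blocks_at: "card {b\<in>B. y \<in> b} = tri_deg y + quad_deg y"
  unfolding blocks_at_eq tri_deg_def quad_deg_def
  using finite_tris finite_quads
  by (intro card_Un_disjoint) (auto simp: tris_def quads_def intro: rev_finite_subset)

lemma card_blocks: "card B = card tris + card quads"
proof -
  have "B = tris \<union> quads"
    using card_block by (auto simp: tris_def quads_def)
  then have "card B = card (tris \<union> quads)"
    by (rule arg_cong)
  also have "\<dots> = card tris + card quads"
    using finite_tris finite_quads by (intro card_Un_disjoint) (auto simp: tris_def quads_def)
  finally show ?thesis .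
qed

lemma replication:
  assumes "y < v"
  shows "2 * tri_deg y + 3 * quad_deg y = v - 1"
proof -
  have "(\<Sum>b\<in>{b\<in>tris. y \<in> b}. card b) = (\<Sum>b\<in>{b\<in>tris. y \<in> b}. 3)"
    by (intro sum.cong) (auto simp: tris_def)
  moreover have "(\<Sum>b\<in>{b\<in>quads. y \<in> b}. card b) = (\<Sum>b\<in>{b\<in>quads. y \<in> b}. 4)"
    by (intro sum.cong) (auto simp: quads_def)
  moreover have "(\<Sum>b\<in>{b\<in>B. y \<in> b}. card b)
      = (\<Sum>b\<in>{b\<in>tris. y \<in> b}. card b) + (\<Sum>b\<in>{b\<in>quads. y \<in> b}. card b)"
    unfolding blocks_at_eq using finite_tris finite_quads
    by (intro sum.union_disjoint) (auto simp: tris_def quads_def intro: rev_finite_subset)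
  ultimately show ?thesis
    using sum_card_blocks_at_vertex[OF assms] card_blocks_at by (simp add: tri_deg_def quad_deg_def)
qed

lemma sum_tri_deg: "(\<Sum>y<v. tri_deg y) = 3 * card tris"
proof -
  have "(\<Sum>b\<in>tris. card (b \<inter> {..<v}) * 1) = (\<Sum>y<v. tri_deg y)"
    using sum_card_Int_eq_sum_incident[OF _ finite_tris, of "{..<v}" "\<lambda>_. 1 :: nat"]
    by (simp add: tri_deg_def)
  moreover have "card (b \<inter> {..<v}) = 3" if "b \<in> tris" for b
    using that block_subset by (simp add: tris_def Int_absorb2)
  ultimately show ?thesis
    by simp
qed

lemma sum_quad_deg: "(\<Sum>y<v. quad_deg y) = 4 * card quads"
proof -
  have "(\<Sum>b\<in>quads. card (b \<inter> {..<v}) * 1) = (\<Sum>y<v. quad_deg y)"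
    using sum_card_Int_eq_sum_incident[OF _ finite_quads, of "{..<v}" "\<lambda>_. 1 :: nat"]
    by (simp add: quad_deg_def)
  moreover have "card (b \<inter> {..<v}) = 4" if "b \<in> quads" for b
    using that block_subset by (simp add: quads_def Int_absorb2)
  ultimately show ?thesis
    by simp
qed

lemma card_tris_quads: "6 * card tris + 12 * card quads = v * (v - 1)"
proof -
  have "6 * card tris + 12 * card quads = (\<Sum>y<v. 2 * tri_deg y + 3 * quad_deg y)"
    by (simp add: sum.distrib sum_distrib_left[symmetric] sum_tri_deg sum_quad_deg)
  also have "\<dots> = (\<Sum>y<v. v - 1)"
    by (intro sum.cong) (simp_all add: replication)
  finally show ?thesis
    by simp
qed

end

locale K18_decomposition = K34_decomposition 18 B for B
begin

lemma card_tris_add_twice_quads: "card tris + 2 * card quads = 51"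
  using card_tris_quads by simp

lemma tri_deg_cases: "y < 18 \<Longrightarrow> tri_deg y = 1 \<or> tri_deg y = 4 \<or> tri_deg y = 7"
  using replication[of y] by presburger

lemma tri_deg_pos:
  assumes "y < 18"
  shows "1 \<le> tri_deg y"
  using tri_deg_cases[OF assms] by auto

lemma card_tris_ge_7: "7 \<le> card tris"
proof -
  have "18 \<le> (\<Sum>y<18. tri_deg y)"
    using sum_bounded_below[of "{..<18}" 1 tri_deg] tri_deg_pos by simp
  moreover have "odd (card tris)"
    using card_tris_add_twice_quads by presburger
  ultimately show ?thesis
    using sum_tri_deg by presburger
qed

lemma few_tris_imp_heavy_vertex:
  assumes "card tris \<le> 7"
  obtains x where "x < 18" "tri_deg x = 4" "\<And>y. y < 18 \<Longrightarrow> y \<noteq> x \<Longrightarrow> tri_deg y = 1"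
proof -
  have total: "(\<Sum>y<18. tri_deg y) = 21"
    using assms card_tris_ge_7 sum_tri_deg by simp
  have "\<not> (\<forall>y<18. tri_deg y = 1)"
  proof
    assume "\<forall>y<18. tri_deg y = 1"
    then have "(\<Sum>y<18. tri_deg y) = (\<Sum>y<18::nat. 1)"
      by (intro sum.cong) auto
    then show False
      using total by simp
  qed
  then obtain x where x: "x < 18" "4 \<le> tri_deg x"
    using tri_deg_cases by force
  let ?rest = "{..<18} - {x}"
  have "card ?rest \<le> (\<Sum>y\<in>?rest. tri_deg y)"
    using sum_bounded_below[of ?rest 1 tri_deg] tri_deg_pos by simp
  moreover have "(\<Sum>y<18. tri_deg y) = tri_deg x + (\<Sum>y\<in>?rest. tri_deg y)"
    using x(1) by (simp add: sum.remove)
  ultimately have "tri_deg x = 4" and rest: "(\<Sum>y\<in>?rest. tri_deg y) = 17"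
    using x total by simp_all
  have "tri_deg y = 1" if y: "y < 18" "y \<noteq> x" for y
  proof -
    have "card (?rest - {y}) \<le> (\<Sum>z\<in>?rest - {y}. tri_deg z)"
      using sum_bounded_below[of "?rest - {y}" 1 tri_deg] tri_deg_pos by simp
    moreover have "(\<Sum>z\<in>?rest. tri_deg z) = tri_deg y + (\<Sum>z\<in>?rest - {y}. tri_deg z)"
      using y by (simp add: sum.remove)
    ultimately show ?thesis
      using rest x(1) y tri_deg_pos[OF y(1)] by simp
  qed
  then show ?thesis
    using that x(1) \<open>tri_deg x = 4\<close> by blast
qed

end

section \<open>A vertex on four triangles\<close>

text \<open>
  The configuration forced by fewer than 30 blocks; its assumptions are contradictory, as shown by
  \<open>heavy_vertex_impossible\<close>.
\<close>

locale K18_heavy_vertex = K18_decomposition +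
  fixes x :: nat
  assumes x_lt: "x < 18"
    and tri_deg_x: "tri_deg x = 4"
    and tri_deg_other: "\<And>y. y < 18 \<Longrightarrow> y \<noteq> x \<Longrightarrow> tri_deg y = 1"
begin

lemma quad_deg_x: "quad_deg x = 3"
  using replication[OF x_lt] tri_deg_x by simp

lemma quad_deg_other: "y < 18 \<Longrightarrow> y \<noteq> x \<Longrightarrow> quad_deg y = 5"
  using replication[of y] tri_deg_other[of y] by simp

lemma card_quads: "card quads = 22"
proof -
  have "(\<Sum>y<18. tri_deg y) = tri_deg x + (\<Sum>y\<in>{..<18} - {x}. tri_deg y)"
    using x_lt by (simp add: sum.remove)
  also have "(\<Sum>y\<in>{..<18} - {x}. tri_deg y) = (\<Sum>y\<in>{..<18} - {x}. 1)"
    using tri_deg_other by (intro sum.cong) auto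
  finally have "card tris = 7"
    using sum_tri_deg tri_deg_x x_lt by simp
  then show ?thesis
    using card_tris_add_twice_quads by simp
qed

definition tris_at_x :: "nat set set" where
  "tris_at_x = {b\<in>tris. x \<in> b}"

definition tri_nbrs :: "nat set" where
  "tri_nbrs = (\<Union>b\<in>tris_at_x. b - {x})"

definition quad_nbrs :: "nat set" where
  "quad_nbrs = {..<18} - {x} - tri_nbrs"

definition far_quads :: "nat set set" where
  "far_quads = {K\<in>quads. x \<notin> K}"

lemma finite_far_quads: "finite far_quads"
  using finite_quads by (simp add: far_quads_def)

lemma tri_nbrs_subset: "tri_nbrs \<subseteq> {..<18} - {x}"
  using block_subset by (auto simp: tri_nbrs_def tris_at_x_def tris_def)

lemma card_tri_nbrs: "card tri_nbrs = 8"
proof -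
  have "card tri_nbrs = (\<Sum>b\<in>tris_at_x. card (b - {x}))"
    unfolding tri_nbrs_def
  proof (rule card_UN_disjoint)
    show "finite tris_at_x"
      using finite_tris by (simp add: tris_at_x_def)
    show "\<forall>b\<in>tris_at_x. finite (b - {x})"
      using finite_block by (auto simp: tris_at_x_def tris_def)
    show "\<forall>b\<in>tris_at_x. \<forall>b'\<in>tris_at_x. b \<noteq> b' \<longrightarrow> (b - {x}) \<inter> (b' - {x}) = {}"
    proof (intro ballI impI)
      fix b b'
      assume "b \<in> tris_at_x" "b' \<in> tris_at_x" "b \<noteq> b'"
      then show "(b - {x}) \<inter> (b' - {x}) = {}"
        using block_eqI[of b b' x] by (auto simp: tris_at_x_def tris_def)
    qed
  qed
  also have "\<dots> = (\<Sum>b\<in>tris_at_x. 2)"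
    using finite_block by (intro sum.cong) (auto simp: tris_at_x_def tris_def)
  also have "\<dots> = 8"
    using tri_deg_x by (simp add: tri_deg_def tris_at_x_def)
  finally show ?thesis .
qed

lemma card_quad_nbrs: "card quad_nbrs = 9"
  using tri_nbrs_subset card_tri_nbrs x_lt
  by (simp add: quad_nbrs_def card_Diff_subset finite_subset)

lemma card_far_quads: "card far_quads = 19"
proof -
  have "quads = far_quads \<union> {K\<in>quads. x \<in> K}"
    by (auto simp: far_quads_def)
  then have "card quads = card far_quads + quad_deg x"
    using finite_quads card_Un_disjoint[of far_quads "{K\<in>quads. x \<in> K}"]
    by (auto simp: far_quads_def quad_deg_def)
  then show ?thesis
    using card_quads quad_deg_x by simp
qed

lemma far_quad_split:
  assumes "K \<in> far_quads"
  shows "card (K \<inter> tri_nbrs) + card (K \<inter> quad_nbrs) = 4"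
proof -
  have K: "K \<in> B" "card K = 4" "x \<notin> K"
    using assms by (auto simp: far_quads_def quads_def)
  have "K = (K \<inter> tri_nbrs) \<union> (K \<inter> quad_nbrs)"
    using block_subset[OF K(1)] K(3) by (auto simp: quad_nbrs_def)
  then have "card K = card (K \<inter> tri_nbrs \<union> K \<inter> quad_nbrs)"
    by (rule arg_cong)
  also have "\<dots> = card (K \<inter> tri_nbrs) + card (K \<inter> quad_nbrs)"
    using finite_block[OF K(1)] by (intro card_Un_disjoint) (auto simp: quad_nbrs_def)
  finally show ?thesis
    using K(2) by simp
qed

lemma tri_at_tri_nbr:
  assumes "a \<in> tri_nbrs"
  obtains b0 where "b0 \<in> tris_at_x" "a \<in> b0" "{b\<in>tris. a \<in> b} = {b0}"
proof -
  obtain b0 where b0: "b0 \<in> tris_at_x" "a \<in> b0"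
    using assms by (auto simp: tri_nbrs_def)
  have "a < 18" "a \<noteq> x"
    using assms tri_nbrs_subset by auto
  then have "card {b\<in>tris. a \<in> b} = 1"
    using tri_deg_other unfolding tri_deg_def by blast
  then obtain c where "{b\<in>tris. a \<in> b} = {c}"
    by (auto simp: card_1_singleton_iff)
  moreover have "b0 \<in> {b\<in>tris. a \<in> b}"
    using b0 by (simp add: tris_at_x_def)
  ultimately have "{b\<in>tris. a \<in> b} = {b0}"
    by simp
  then show thesis
    using that b0 by blast
qed

lemma quads_at_tri_nbr:
  assumes a: "a \<in> tri_nbrs"
  shows "{K\<in>quads. a \<in> K} = {K\<in>far_quads. a \<in> K}"
proof -
  obtain b0 where b0: "b0 \<in> tris_at_x" "a \<in> b0"
    using a by (auto simp: tri_nbrs_def)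
  have b0_tri: "b0 \<in> B" "card b0 = 3" "x \<in> b0" "a \<noteq> x"
    using b0 a tri_nbrs_subset by (auto simp: tris_at_x_def tris_def)
  have "x \<notin> K" if "K \<in> quads" "a \<in> K" for K
  proof
    assume "x \<in> K"
    have "K \<in> B"
      using that(1) by (simp add: quads_def)
    then have "K = b0"
      using block_eqI[OF _ b0_tri(1) that(2) \<open>x \<in> K\<close> b0(2) b0_tri(3,4)] by blast
    then show False
      using that b0_tri by (simp add: quads_def)
  qed
  then show ?thesis
    by (auto simp: far_quads_def)
qed

lemma far_quads_at_tri_nbr:
  assumes a: "a \<in> tri_nbrs"
  shows "card {K\<in>far_quads. a \<in> K} = 5"
    and "(\<Sum>K\<in>{K\<in>far_quads. a \<in> K}. card (K \<inter> tri_nbrs)) = 11"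
proof -
  obtain b0 where b0: "b0 \<in> tris_at_x" "{b\<in>tris. a \<in> b} = {b0}"
    using tri_at_tri_nbr[OF a] by blast
  have b0_tri: "b0 \<in> B" "card b0 = 3" "x \<in> b0"
    using b0(1) by (auto simp: tris_at_x_def tris_def)
  have a_lt: "a < 18" "a \<noteq> x"
    using a tri_nbrs_subset by auto
  have quads_at_a: "{K\<in>quads. a \<in> K} = {K\<in>far_quads. a \<in> K}"
    by (rule quads_at_tri_nbr[OF a])
  then show card_at_a: "card {K\<in>far_quads. a \<in> K} = 5"
    using quad_deg_other[OF a_lt] by (simp add: quad_deg_def)
  have blocks_at_a: "{b\<in>B. a \<in> b} = insert b0 {K\<in>far_quads. a \<in> K}"
    using blocks_at_eq[of a] b0(2) quads_at_a by simp
  have "b0 \<notin> far_quads"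
    using b0_tri by (simp add: far_quads_def)
  moreover have "card (b0 \<inter> tri_nbrs) = 2"
  proof -
    have "b0 \<inter> tri_nbrs = b0 - {x}"
      using b0(1) by (auto simp: tri_nbrs_def)
    then show ?thesis
      using b0_tri finite_block by simp
  qed
  moreover have "(\<Sum>b\<in>{b\<in>B. a \<in> b}. card (b \<inter> tri_nbrs)) = 13"
  proof -
    have "tri_nbrs \<subseteq> {..<18}"
      using tri_nbrs_subset by blast
    then have "(\<Sum>b\<in>{b\<in>B. a \<in> b}. card (b \<inter> tri_nbrs)) = card {b\<in>B. a \<in> b} + card tri_nbrs - 1"
      by (rule sum_card_blocks_at[OF a])
    then show ?thesis
      using card_blocks_at[of a] tri_deg_other[OF a_lt] quad_deg_other[OF a_lt] card_tri_nbrs by simp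
  qed
  ultimately show "(\<Sum>K\<in>{K\<in>far_quads. a \<in> K}. card (K \<inter> tri_nbrs)) = 11"
    using finite_far_quads by (simp add: blocks_at_a)
qed

lemma quad_nbrD: "c \<in> quad_nbrs \<Longrightarrow> c < 18 \<and> c \<noteq> x \<and> c \<notin> tri_nbrs"
  by (simp add: quad_nbrs_def)

lemma tri_at_quad_nbr:
  assumes c: "c \<in> quad_nbrs"
  obtains bc where "{b\<in>tris. c \<in> b} = {bc}" "bc \<subseteq> quad_nbrs"
proof -
  have c_lt: "c < 18" "c \<noteq> x" "c \<notin> tri_nbrs"
    using quad_nbrD[OF c] by auto
  then have "card {b\<in>tris. c \<in> b} = 1"
    using tri_deg_other unfolding tri_deg_def by blast
  then obtain bc where bc: "{b\<in>tris. c \<in> b} = {bc}"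
    by (auto simp: card_1_singleton_iff)
  then have bc_tri: "bc \<in> tris" "c \<in> bc"
    by auto
  have "x \<notin> bc"
  proof
    assume "x \<in> bc"
    then have "bc \<in> tris_at_x"
      using bc_tri by (simp add: tris_at_x_def)
    then show False
      using bc_tri c_lt by (auto simp: tri_nbrs_def)
  qed
  moreover have "bc \<inter> tri_nbrs = {}"
  proof (rule ccontr)
    assume "bc \<inter> tri_nbrs \<noteq> {}"
    then obtain a where a: "a \<in> bc" "a \<in> tri_nbrs"
      by blast
    obtain b0 where b0: "b0 \<in> tris_at_x" "a \<in> b0" "{b\<in>tris. a \<in> b} = {b0}"
      by (rule tri_at_tri_nbr[OF a(2)])
    have "bc \<in> {b\<in>tris. a \<in> b}"
      using a bc_tri by simp
    then have "bc \<in> tris_at_x"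
      using b0 by simp
    then show False
      using \<open>x \<notin> bc\<close> by (simp add: tris_at_x_def)
  qed
  moreover have "bc \<subseteq> {..<18}"
    using bc_tri block_subset by (auto simp: tris_def)
  ultimately have "bc \<subseteq> quad_nbrs"
    by (auto simp: quad_nbrs_def)
  then show thesis
    using that bc by blast
qed

lemma quad_at_x_and_quad_nbr:
  assumes c: "c \<in> quad_nbrs"
  obtains Kc where "Kc \<in> quads" "x \<in> Kc" "Kc - {x} \<subseteq> quad_nbrs"
    "{K\<in>quads. c \<in> K} = insert Kc {K\<in>far_quads. c \<in> K}"
proof -
  have c_lt: "c < 18" "c \<noteq> x" "c \<notin> tri_nbrs"
    using quad_nbrD[OF c] by auto
  obtain Kc where Kc: "Kc \<in> B" "x \<in> Kc" "c \<in> Kc"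
    using pair_in_block[OF x_lt c_lt(1)] c_lt(2) by metis
  have "Kc \<notin> tris"
  proof
    assume "Kc \<in> tris"
    then have "Kc \<in> tris_at_x"
      using Kc by (simp add: tris_at_x_def)
    then show False
      using Kc c_lt by (auto simp: tri_nbrs_def)
  qed
  then have "Kc \<in> quads"
    using Kc card_block by (auto simp: tris_def quads_def)
  have "Kc \<inter> tri_nbrs = {}"
  proof (rule ccontr)
    assume "Kc \<inter> tri_nbrs \<noteq> {}"
    then obtain a where a: "a \<in> Kc" "a \<in> tri_nbrs"
      by blast
    then obtain b0 where b0: "b0 \<in> tris_at_x" "a \<in> b0"
      by (auto simp: tri_nbrs_def)
    then have "b0 \<in> B" "x \<in> b0" "a \<noteq> x"
      using a by (auto simp: tris_at_x_def tris_def tri_nbrs_def)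
    then have "Kc = b0"
      using block_eqI[OF Kc(1) _ a(1) Kc(2) b0(2)] by blast
    then show False
      using b0(1) \<open>Kc \<notin> tris\<close> by (simp add: tris_at_x_def)
  qed
  then have "Kc - {x} \<subseteq> quad_nbrs"
    using block_subset[OF Kc(1)] by (auto simp: quad_nbrs_def)
  moreover have Kc_unique: "K = Kc" if "K \<in> quads" "c \<in> K" "x \<in> K" for K
    using block_eqI[of K Kc c x] that Kc c_lt by (simp add: quads_def)
  have "{K\<in>quads. c \<in> K} = insert Kc {K\<in>far_quads. c \<in> K}"
    using Kc \<open>Kc \<in> quads\<close> by (auto simp: far_quads_def dest: Kc_unique)
  ultimately show thesis
    using that \<open>Kc \<in> quads\<close> Kc(2) by blast
qed

lemma far_quads_at_quad_nbr:
  assumes c: "c \<in> quad_nbrs"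
  shows "card {K\<in>far_quads. c \<in> K} = 4"
    and "(\<Sum>K\<in>{K\<in>far_quads. c \<in> K}. card (K \<inter> quad_nbrs)) = 8"
proof -
  have c_lt: "c < 18" "c \<noteq> x"
    using quad_nbrD[OF c] by auto
  obtain bc where bc: "{b\<in>tris. c \<in> b} = {bc}" "bc \<subseteq> quad_nbrs"
    using tri_at_quad_nbr[OF c] by blast
  obtain Kc where Kc: "Kc \<in> quads" "x \<in> Kc" "Kc - {x} \<subseteq> quad_nbrs"
    and quads_at_c: "{K\<in>quads. c \<in> K} = insert Kc {K\<in>far_quads. c \<in> K}"
    by (rule quad_at_x_and_quad_nbr[OF c])
  have Kc_far: "Kc \<notin> far_quads"
    using Kc by (simp add: far_quads_def)
  show card_at_c: "card {K\<in>far_quads. c \<in> K} = 4"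
    using quad_deg_other[OF c_lt] quads_at_c Kc_far finite_far_quads by (simp add: quad_deg_def)
  have bc_tri: "bc \<in> B" "card bc = 3"
    using bc(1) by (auto simp: tris_def)
  have "bc \<noteq> Kc" "bc \<notin> far_quads"
    using bc_tri Kc(1) by (auto simp: quads_def far_quads_def)
  moreover have "card (bc \<inter> quad_nbrs) = 3"
    using bc bc_tri by (simp add: Int_absorb2)
  moreover have "card (Kc \<inter> quad_nbrs) = 3"
  proof -
    have "Kc \<inter> quad_nbrs = Kc - {x}"
      using Kc(3) quad_nbrD by blast
    then show ?thesis
      using Kc(1,2) finite_quads finite_block by (simp add: quads_def)
  qed
  moreover have "(\<Sum>b\<in>{b\<in>B. c \<in> b}. card (b \<inter> quad_nbrs)) = 14"
  proof -
    have "quad_nbrs \<subseteq> {..<18}"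
      by (auto simp: quad_nbrs_def)
    then have "(\<Sum>b\<in>{b\<in>B. c \<in> b}. card (b \<inter> quad_nbrs)) = card {b\<in>B. c \<in> b} + card quad_nbrs - 1"
      by (rule sum_card_blocks_at[OF c])
    then show ?thesis
      using card_blocks_at[of c] tri_deg_other[OF c_lt] quad_deg_other[OF c_lt] card_quad_nbrs by simp
  qed
  ultimately show "(\<Sum>K\<in>{K\<in>far_quads. c \<in> K}. card (K \<inter> quad_nbrs)) = 8"
    using finite_far_quads Kc_far by (simp add: blocks_at_eq bc(1) quads_at_c)
qed

lemma finite_tri_nbrs: "finite tri_nbrs"
  using tri_nbrs_subset finite_subset by blast

lemma sum_card_far_quads_Int: "(\<Sum>K\<in>far_quads. card (K \<inter> tri_nbrs)) = 40"
proof -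
  have "(\<Sum>K\<in>far_quads. card (K \<inter> tri_nbrs) * 1) = (\<Sum>a\<in>tri_nbrs. card {K\<in>far_quads. a \<in> K})"
    using sum_card_Int_eq_sum_incident[OF finite_tri_nbrs finite_far_quads, of "\<lambda>_. 1 :: nat"]
    by simp
  also have "\<dots> = (\<Sum>a\<in>tri_nbrs. 5)"
    using far_quads_at_tri_nbr(1) by (intro sum.cong) auto
  finally show ?thesis
    using card_tri_nbrs by simp
qed

lemma sum_card_far_quads_Int_squared: "(\<Sum>K\<in>far_quads. card (K \<inter> tri_nbrs) ^ 2) = 88"
proof -
  have "(\<Sum>K\<in>far_quads. card (K \<inter> tri_nbrs) * card (K \<inter> tri_nbrs))
      = (\<Sum>a\<in>tri_nbrs. \<Sum>K\<in>{K\<in>far_quads. a \<in> K}. card (K \<inter> tri_nbrs))"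
    using sum_card_Int_eq_sum_incident[OF finite_tri_nbrs finite_far_quads, of "\<lambda>K. card (K \<inter> tri_nbrs)"]
    by simp
  also have "\<dots> = (\<Sum>a\<in>tri_nbrs. 11)"
    using far_quads_at_tri_nbr(2) by (intro sum.cong) auto
  finally show ?thesis
    using card_tri_nbrs by (simp add: power2_eq_square)
qed

definition excess :: "nat set \<Rightarrow> int" where
  "excess K = int (card (K \<inter> tri_nbrs)) - 2"

lemma excess_bounds: "K \<in> far_quads \<Longrightarrow> -2 \<le> excess K \<and> excess K \<le> 2"
  using far_quad_split[of K] by (simp add: excess_def)

lemma sum_excess: "(\<Sum>K\<in>far_quads. excess K) = 2"
proof -
  have "(\<Sum>K\<in>far_quads. excess K) = int (\<Sum>K\<in>far_quads. card (K \<inter> tri_nbrs)) - 2 * int (card far_quads)"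
    by (simp add: excess_def sum_subtractf)
  then show ?thesis
    using sum_card_far_quads_Int card_far_quads by simp
qed

lemma sum_excess_squared: "(\<Sum>K\<in>far_quads. excess K ^ 2) = 4"
proof -
  have "(\<Sum>K\<in>far_quads. excess K ^ 2)
      = (\<Sum>K\<in>far_quads. int (card (K \<inter> tri_nbrs) ^ 2) - 4 * int (card (K \<inter> tri_nbrs)) + 4)"
    by (intro sum.cong) (simp_all add: excess_def power2_eq_square algebra_simps)
  also have "\<dots> = int (\<Sum>K\<in>far_quads. card (K \<inter> tri_nbrs) ^ 2)
      - 4 * int (\<Sum>K\<in>far_quads. card (K \<inter> tri_nbrs)) + 4 * int (card far_quads)"
    by (simp add: sum.distrib sum_subtractf sum_distrib_left)
  finally show ?thesis
    using sum_card_far_quads_Int sum_card_far_quads_Int_squared card_far_quads by simp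
qed

lemma sum_excess_at_tri_nbr:
  assumes "a \<in> tri_nbrs"
  shows "(\<Sum>K\<in>{K\<in>far_quads. a \<in> K}. excess K) = 1"
proof -
  have "(\<Sum>K\<in>{K\<in>far_quads. a \<in> K}. excess K)
      = int (\<Sum>K\<in>{K\<in>far_quads. a \<in> K}. card (K \<inter> tri_nbrs)) - 2 * int (card {K\<in>far_quads. a \<in> K})"
    by (simp add: excess_def sum_subtractf)
  then show ?thesis
    using far_quads_at_tri_nbr[OF assms] by simp
qed

lemma sum_excess_at_quad_nbr:
  assumes "c \<in> quad_nbrs"
  shows "(\<Sum>K\<in>{K\<in>far_quads. c \<in> K}. excess K) = 0"
proof -
  have "excess K = 2 - int (card (K \<inter> quad_nbrs))" if "K \<in> {K\<in>far_quads. c \<in> K}" for K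
    using that far_quad_split[of K] by (simp add: excess_def)
  then have "(\<Sum>K\<in>{K\<in>far_quads. c \<in> K}. excess K)
      = 2 * int (card {K\<in>far_quads. c \<in> K}) - int (\<Sum>K\<in>{K\<in>far_quads. c \<in> K}. card (K \<inter> quad_nbrs))"
    by (simp add: sum_subtractf)
  then show ?thesis
    using far_quads_at_quad_nbr[OF assms] by simp
qed

lemma abs_excess_le_1:
  assumes "K1 \<in> far_quads"
  shows "\<bar>excess K1\<bar> \<le> 1"
proof (rule ccontr)
  assume "\<not> \<bar>excess K1\<bar> \<le> 1"
  then have "excess K1 = 2 \<or> excess K1 = -2"
    using excess_bounds[OF assms] by auto
  then have "excess K1 ^ 2 = 4"
    by auto
  moreover have "(\<Sum>K\<in>far_quads. excess K ^ 2) = excess K1 ^ 2 + (\<Sum>K\<in>far_quads - {K1}. excess K ^ 2)"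
    using finite_far_quads assms by (simp add: sum.remove)
  ultimately have "(\<Sum>K\<in>far_quads - {K1}. excess K ^ 2) = 0"
    using sum_excess_squared by simp
  then have others: "excess K = 0" if "K \<in> far_quads - {K1}" for K
    using that finite_far_quads sum_nonneg_eq_0_iff[of "far_quads - {K1}" "\<lambda>K. excess K ^ 2"] by simp
  have "(\<Sum>K\<in>far_quads. excess K) = excess K1 + (\<Sum>K\<in>far_quads - {K1}. excess K)"
    using finite_far_quads assms by (simp add: sum.remove)
  then have "excess K1 = 2"
    using sum_excess others by simp
  then have "card (K1 \<inter> tri_nbrs) = 4"
    by (simp add: excess_def)
  have "\<not> tri_nbrs \<subseteq> K1"
  proof
    assume "tri_nbrs \<subseteq> K1"
    then have "K1 \<inter> tri_nbrs = tri_nbrs"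
      by blast
    then show False
      using \<open>card (K1 \<inter> tri_nbrs) = 4\<close> card_tri_nbrs by simp
  qed
  then obtain a where a: "a \<in> tri_nbrs" "a \<notin> K1"
    by blast
  have "(\<Sum>K\<in>{K\<in>far_quads. a \<in> K}. excess K) = 0"
    using others a(2) by (intro sum.neutral) auto
  then show False
    using sum_excess_at_tri_nbr[OF a(1)] by simp
qed

lemma excess_cases: "K \<in> far_quads \<Longrightarrow> excess K \<in> {-1, 0, 1}"
  using abs_excess_le_1[of K] by auto

lemma unique_deficient_far_quad:
  obtains K0 where "{K\<in>far_quads. excess K < 0} = {K0}"
proof -
  have "(\<Sum>K\<in>far_quads. excess K ^ 2 - excess K) = (\<Sum>K\<in>far_quads. 2 * of_bool (excess K < 0))"
  proof (rule sum.cong)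
    fix K
    assume "K \<in> far_quads"
    then show "excess K ^ 2 - excess K = 2 * of_bool (excess K < 0)"
      using excess_cases[of K] by auto
  qed simp
  also have "\<dots> = 2 * int (card {K\<in>far_quads. excess K < 0})"
    using finite_far_quads by (simp add: sum_distrib_left[symmetric] Int_def)
  finally have "card {K\<in>far_quads. excess K < 0} = 1"
    using sum_excess sum_excess_squared by (simp add: sum_subtractf)
  then show thesis
    using that by (auto simp: card_1_singleton_iff)
qed

lemma heavy_vertex_impossible: False
proof -
  obtain K0 where K0: "{K\<in>far_quads. excess K < 0} = {K0}"
    by (rule unique_deficient_far_quad)
  then have "K0 \<in> far_quads" "excess K0 < 0"
    by auto
  then have K0_far: "K0 \<in> far_quads" "excess K0 = -1"
    using excess_cases[of K0] by auto
  then obtain a0 where "K0 \<inter> tri_nbrs = {a0}"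
    by (auto simp: excess_def card_1_singleton_iff)
  then have "a0 \<in> K0 \<inter> tri_nbrs"
    by simp
  then have a0: "a0 \<in> K0" "a0 \<in> tri_nbrs"
    by simp_all
  have "\<exists>K1\<in>{K\<in>far_quads. a0 \<in> K} - {K0}. 0 < excess K1"
  proof (rule sum_gt_member_imp_pos)
    show "excess K0 < (\<Sum>K\<in>{K\<in>far_quads. a0 \<in> K}. excess K)"
      using sum_excess_at_tri_nbr a0(2) K0_far(2) by simp
  qed (use finite_far_quads K0_far(1) a0(1) in auto)
  then obtain K1 where "K1 \<in> {K\<in>far_quads. a0 \<in> K}" "K1 \<noteq> K0" "0 < excess K1"
    by blast
  then have K1: "K1 \<in> far_quads" "a0 \<in> K1" "K1 \<noteq> K0" "excess K1 = 1"
    using excess_cases[of K1] by auto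
  then have "card (K1 \<inter> quad_nbrs) = 1"
    using far_quad_split[OF K1(1)] by (simp add: excess_def)
  then obtain c1 where "K1 \<inter> quad_nbrs = {c1}"
    by (auto simp: card_1_singleton_iff)
  then have "c1 \<in> K1 \<inter> quad_nbrs"
    by simp
  then have c1: "c1 \<in> K1" "c1 \<in> quad_nbrs"
    by simp_all
  have "\<exists>K2\<in>{K\<in>far_quads. c1 \<in> K} - {K1}. excess K2 < 0"
  proof (rule sum_lt_member_imp_neg)
    show "(\<Sum>K\<in>{K\<in>far_quads. c1 \<in> K}. excess K) < excess K1"
      using sum_excess_at_quad_nbr c1(2) K1(4) by simp
  qed (use finite_far_quads K1(1) c1(1) in auto)
  then obtain K2 where "K2 \<in> {K\<in>far_quads. c1 \<in> K}" "excess K2 < 0"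
    by blast
  then have "K2 \<in> {K\<in>far_quads. excess K < 0}" "c1 \<in> K2"
    by auto
  then have "c1 \<in> K0"
    using K0 by simp
  moreover have "a0 \<noteq> c1"
    using a0(2) c1(2) quad_nbrD by blast
  moreover have "K0 \<in> B" "K1 \<in> B"
    using K0_far(1) K1(1) by (auto simp: far_quads_def quads_def)
  ultimately have "K0 = K1"
    using block_eqI a0(1) c1(1) K1(2) by blast
  then show False
    using K1(3) by simp
qed

end

lemma (in K18_decomposition) card_blocks_ge_30: "30 \<le> card B"
proof (rule ccontr)
  assume "\<not> 30 \<le> card B"
  then have "card tris \<le> 7"
    using card_blocks card_tris_add_twice_quads by simp
  then obtain x where "x < 18" "tri_deg x = 4" "\<And>y. y < 18 \<Longrightarrow> y \<noteq> x \<Longrightarrow> tri_deg y = 1"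
    using few_tris_imp_heavy_vertex by blast
  then interpret K18_heavy_vertex B x
    by unfold_locales
  show False
    by (rule heavy_vertex_impossible)
qed

section \<open>An explicit decomposition of K18\<close>

definition link :: "nat list list \<Rightarrow> nat \<Rightarrow> nat list" where
  "link L x = concat (map (remove1 x) (filter (\<lambda>b. x \<in> set b) L))"

lemma link_block_unique:
  assumes "distinct (link L x)" and "\<forall>b\<in>set L. distinct b"
    and "b \<in> set L" "x \<in> set b" "y \<in> set b" and "b' \<in> set L" "x \<in> set b'" "y \<in> set b'"
    and "x \<noteq> y"
  shows "set b = set b'"
proof -
  let ?Lx = "map (remove1 x) (filter (\<lambda>b. x \<in> set b) L)"
  have rm_b: "set (remove1 x b) = set b - {x}" and rm_b': "set (remove1 x b') = set b' - {x}"
    using assms(2,3,6) by (simp_all add: set_remove1_eq)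
  then have "set (remove1 x b) \<inter> set (remove1 x b') \<noteq> {}"
    using assms(5,8,9) by blast
  moreover have "remove1 x b \<in> set ?Lx" "remove1 x b' \<in> set ?Lx"
    using assms(3,4,6,7) by auto
  ultimately have "remove1 x b = remove1 x b'"
    using assms(1) by (auto simp: link_def distinct_concat_iff)
  then have "set b - {x} = set b' - {x}"
    using rm_b rm_b' by simp
  then show ?thesis
    using assms(4,7) by (metis insert_Diff)
qed

lemma is_decomp_of_lists:
  assumes blocks: "\<forall>b\<in>set L. distinct b \<and> length b \<in> K \<and> set b \<subseteq> {..<v}"
    and links: "\<forall>x<v. sort (link L x) = remove1 x [0..<v]"
  shows "is_decomp v K (set ` set L)"
  unfolding is_decomp_def
proof (intro conjI allI impI)
  show "\<forall>b\<in>set ` set L. b \<subseteq> {..<v} \<and> card b \<in> K"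
    using blocks by (auto simp: distinct_card)
next
  fix x y :: nat
  assume xy: "x < v" "y < v" "x \<noteq> y"
  have sorted_link: "sort (link L x) = remove1 x [0..<v]"
    using links xy(1) by blast
  have "set (link L x) = {..<v} - {x}"
    by (metis sorted_link set_sort set_remove1_eq distinct_upt set_upt atLeast0LessThan)
  then have "y \<in> set (link L x)"
    using xy by simp
  then obtain b where b: "b \<in> set L" "x \<in> set b" "y \<in> set b"
    using xy(3) by (auto simp: link_def in_set_remove1)
  have "distinct (link L x)"
    by (metis sorted_link distinct_sort distinct_remove1 distinct_upt)
  then have "set b' = set b" if "b' \<in> set L" "x \<in> set b'" "y \<in> set b'" for b'
    using link_block_unique[of L x b' y b] that b blocks xy(3) by blast
  then show "\<exists>!b. b \<in> set ` set L \<and> x \<in> b \<and> y \<in> b"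
    using b by blast
qed

definition decomp_K18 :: "nat list list" where
  "decomp_K18 = [[0, 1, 4, 15], [0, 2, 10, 13], [0, 3, 6, 14], [0, 5, 9, 17], [0, 7, 11, 16],
    [1, 2, 7, 8], [1, 3, 13, 17], [1, 5, 6, 10], [1, 9, 11, 14], [2, 3, 9, 15], [3, 5, 7, 12],
    [3, 8, 10, 11], [6, 13, 15, 16], [8, 14, 16, 17],
    [0, 8, 12], [1, 12, 16], [3, 4, 16], [9, 10, 16], [7, 9, 13], [6, 8, 9], [4, 9, 12],
    [4, 6, 7], [4, 10, 14], [7, 10, 17], [7, 14, 15], [10, 12, 15], [4, 8, 13], [4, 5, 11],
    [2, 4, 17], [2, 5, 16], [2, 12, 14], [2, 6, 11], [5, 8, 15], [5, 13, 14], [6, 12, 17],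
    [11, 12, 13], [11, 15, 17]]"

lemma is_decomp_K18_exists: "\<exists>B. is_decomp 18 {3, 4} B"
proof
  show "is_decomp 18 {3, 4} (set ` set decomp_K18)"
  proof (rule is_decomp_of_lists)
    show "\<forall>b\<in>set decomp_K18. distinct b \<and> length b \<in> {3, 4} \<and> set b \<subseteq> {..<18}"
      unfolding decomp_K18_def by code_simp
    show "\<forall>x<18. sort (link decomp_K18 x) = remove1 x [0..<18]"
      unfolding decomp_K18_def link_def by code_simp
  qed
qed

theorem mainTheorem4:
  shows "D 18 {3, 4} \<ge> 30"
  unfolding D_def
proof (rule cInf_greatest)
  \<comment> \<open>On nat, Inf {} = 0, so the bound also needs some decomposition to exist.\<close>
  show "card ` {B. is_decomp 18 {3, 4} B} \<noteq> {}"
    using is_decomp_K18_exists by blast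
  fix n
  assume "n \<in> card ` {B. is_decomp 18 {3, 4} B}"
  then obtain B where "is_decomp 18 {3, 4} B" "n = card B"
    by blast
  then show "30 \<le> n"
    using K18_decomposition.card_blocks_ge_30
    by (simp add: K18_decomposition_def K34_decomposition_def decomposition_def)
qed

end
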